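(* Let $G=(V,E)$ be a hypergraph, $k\ge 2$ an integer, and $\emptyset\neq R\subsetneq U\subsetneq V$. Let $S=\{u_1,\dots,u_p\}\subseteq U\setminus R$ with $p\ge 2k-2$. For each $i\in[p]$ let $(\overline{A_i},A_i)$ be a minimum $((S\cup R)\setminus\{u_i\},\overline{U})$-terminal cut. Suppose that $u_i\in A_i\setminus\bigl(\bigcup_{j\in[p]\setminus\{i\}}A_j\bigr)$ for every $i\in[p]$. Then there exists a $k$-partition $(P_1,\dots,P_k)$ of $V$ with $\overline{U}\subsetneq P_k$ such that \[\mathrm{cost}(P_1,\dots,P_k)\le \tfrac12\min\{d(A_i)+d(A_j): i,j\in[p],\ i\neq j\}.\]
   Context: A hypergraph $G=(V,E)$ has finite vertex set $V$ and finite multiset $E$ of hyperedges (subsets of $V$). For $X\subseteq V$, $\overline X=V\setminus X$ and $d(X)$ is the number of hyperedges meeting both $X$ and $\overline X$. For a partition of $V$ into non-empty parts, $\mathrm{cost}$ is the number of hyperedges meeting at least two parts. For disjoint $S',T'\subseteq V$, a 2-partition $(X,\overline X)$ is an $(S',T')$-terminal cut if $S'\subseteq X\subseteq V\setminus T'$ (so here $(S\cup R)\setminus\{u_i\}\subseteq\overline{A_i}$ and $\overline U\subseteq A_i$); it is minimum if $d(X)$ is minimum among all $(S',T')$-terminal cuts. *)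

theory Defs
  imports Complex_Main "HOL-Library.Multiset"
begin

definition hypergraph :: "'a set \<Rightarrow> 'a set multiset \<Rightarrow> bool" where
  "hypergraph V E \<longleftrightarrow> finite V \<and> (\<forall>e \<in># E. e \<subseteq> V)"

definition dcut :: "'a set \<Rightarrow> 'a set multiset \<Rightarrow> 'a set \<Rightarrow> nat" where
  "dcut V E X = size (filter_mset (\<lambda>e. e \<inter> X \<noteq> {} \<and> e \<inter> (V - X) \<noteq> {}) E)"

definition is_k_partition :: "'a set \<Rightarrow> nat \<Rightarrow> (nat \<Rightarrow> 'a set) \<Rightarrow> bool" where
  "is_k_partition V k P \<longleftrightarrow>
     (\<forall>i\<in>{1..k}. P i \<noteq> {}) \<and>
     (\<forall>i\<in>{1..k}. \<forall>j\<in>{1..k}. i \<noteq> j \<longrightarrow> P i \<inter> P j = {}) \<and>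
     (\<Union>i\<in>{1..k}. P i) = V"

definition cost :: "'a set multiset \<Rightarrow> nat \<Rightarrow> (nat \<Rightarrow> 'a set) \<Rightarrow> nat" where
  "cost E k P = size (filter_mset
     (\<lambda>e. \<exists>i\<in>{1..k}. \<exists>j\<in>{1..k}. i \<noteq> j \<and> e \<inter> P i \<noteq> {} \<and> e \<inter> P j \<noteq> {}) E)"

text \<open>(X, V - X) is an (S',T')-terminal cut.\<close>
definition terminal_cut :: "'a set \<Rightarrow> 'a set \<Rightarrow> 'a set \<Rightarrow> 'a set \<Rightarrow> bool" where
  "terminal_cut V S' T' X \<longleftrightarrow> S' \<subseteq> X \<and> X \<subseteq> V - T'"

definition min_terminal_cut ::
  "'a set \<Rightarrow> 'a set multiset \<Rightarrow> 'a set \<Rightarrow> 'a set \<Rightarrow> 'a set \<Rightarrow> bool" where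
  "min_terminal_cut V E S' T' X \<longleftrightarrow> terminal_cut V S' T' X \<and>
     (\<forall>Y. terminal_cut V S' T' Y \<longrightarrow> dcut V E X \<le> dcut V E Y)"

end

theory Submission
  imports Defs "HOL-Library.Disjoint_Sets"
begin

(*
  Let Z_i be the set of vertices covered by A_i and by no other A_j. For any k - 1 indices, the
  sets Z_i together with the rest of V form a k-partition whose last part contains R (which avoids
  every A_i) and V - U (which lies in every A_i), and a hyperedge meeting two of its parts crosses
  one of the chosen Z_i. Take the disjoint index blocks {1, ..., k-1} and {k, ..., 2k-2}. Each
  hyperedge e is counted by at most potential(e) of the two partitions, where the potential is 2
  if e meets two different Z_i, or meets both a vertex covered by no A_i and a vertex covered at
  least twice; and is otherwise 1 or 0 according as e crosses some Z_i or not.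

  For the family {A_i, A_j} the potential of e is at most the number of the sets A_i, A_j that e
  crosses, so its total is at most d(A_i) + d(A_j). Adding a further set A_t raises the total by
  at most d(A_t) - d(A_t Int D), where D is the set of vertices covered at least twice so far.
  Since D contains A_i Int A_j, hence V - U, the set A_t Int D is again the sink side of a
  terminal cut, and minimality of A_t makes the increase nonpositive. So the two partitions
  together cost at most min (d(A_i) + d(A_j)), and the cheaper one at most half of it.
*)

definition crosses :: "'a set \<Rightarrow> 'a set \<Rightarrow> bool" where
  "crosses X e \<longleftrightarrow> e \<inter> X \<noteq> {} \<and> e - X \<noteq> {}"

lemma crosses_iff_Int: "crosses X e \<longleftrightarrow> e \<inter> X \<noteq> {} \<and> e \<inter> X \<noteq> e"
  unfolding crosses_def by blast

lemma size_filter_mset_eq_sum_of_bool: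
  "size (filter_mset P M) = (\<Sum>x\<in>#M. of_bool (P x) :: nat)"
  by (induction M) auto

lemma dcut_eq_sum_crosses:
  assumes "\<forall>e\<in>#E. e \<subseteq> V"
  shows "dcut V E X = (\<Sum>e\<in>#E. of_bool (crosses X e))"
proof -
  have "filter_mset (\<lambda>e. e \<inter> X \<noteq> {} \<and> e \<inter> (V - X) \<noteq> {}) E = filter_mset (crosses X) E"
    using assms by (intro filter_mset_cong) (auto simp: crosses_def)
  then show ?thesis
    by (simp add: dcut_def size_filter_mset_eq_sum_of_bool)
qed

lemma dcut_Diff:
  assumes "X \<subseteq> V"
  shows "dcut V E (V - X) = dcut V E X"
proof -
  have "V - (V - X) = X" using assms by blast
  then show ?thesis unfolding dcut_def by (simp add: conj_commute)
qed

lemma min_terminal_cut_le_inter: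
  assumes "min_terminal_cut V E S T (V - A)" "A \<subseteq> V" "T \<subseteq> D"
  shows "dcut V E A \<le> dcut V E (A \<inter> D)"
proof -
  have "terminal_cut V S T (V - (A \<inter> D))"
    using assms unfolding min_terminal_cut_def terminal_cut_def by blast
  then have "dcut V E (V - A) \<le> dcut V E (V - (A \<inter> D))"
    using assms(1) unfolding min_terminal_cut_def by blast
  then show ?thesis
    using assms(2) by (simp add: dcut_Diff le_infI1)
qed

definition exclusive_part :: "('i \<Rightarrow> 'a set) \<Rightarrow> 'i set \<Rightarrow> 'i \<Rightarrow> 'a set" where
  "exclusive_part A I m = A m - (\<Union>n\<in>I - {m}. A n)"

definition uncovered_part :: "('i \<Rightarrow> 'a set) \<Rightarrow> 'i set \<Rightarrow> 'a set" where
  "uncovered_part A I = - (\<Union>m\<in>I. A m)"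

definition multiply_covered :: "('i \<Rightarrow> 'a set) \<Rightarrow> 'i set \<Rightarrow> 'a set" where
  "multiply_covered A I = {x. \<exists>m\<in>I. \<exists>n\<in>I. m \<noteq> n \<and> x \<in> A m \<and> x \<in> A n}"

lemma Int_subset_multiply_covered:
  "i \<in> I \<Longrightarrow> j \<in> I \<Longrightarrow> i \<noteq> j \<Longrightarrow> A i \<inter> A j \<subseteq> multiply_covered A I"
  unfolding multiply_covered_def by blast

lemma regions_cover:
  "x \<in> uncovered_part A I \<or> x \<in> multiply_covered A I \<or> (\<exists>m\<in>I. x \<in> exclusive_part A I m)"
  unfolding uncovered_part_def multiply_covered_def exclusive_part_def by blast

lemma uncovered_part_Int_multiply_covered: "uncovered_part A I \<inter> multiply_covered A I = {}"
  unfolding uncovered_part_def multiply_covered_def by blast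

lemma exclusive_part_disjoint:
  assumes "m \<in> I"
  shows "uncovered_part A I \<inter> exclusive_part A I m = {}"
    and "multiply_covered A I \<inter> exclusive_part A I m = {}"
    and "n \<in> I \<Longrightarrow> n \<noteq> m \<Longrightarrow> exclusive_part A I n \<inter> exclusive_part A I m = {}"
  using assms unfolding uncovered_part_def multiply_covered_def exclusive_part_def by auto

lemma uncovered_part_insert: "uncovered_part A (insert t I) = uncovered_part A I - A t"
  unfolding uncovered_part_def by blast

lemma multiply_covered_insert:
  "t \<notin> I \<Longrightarrow> multiply_covered A (insert t I) = multiply_covered A I \<union> (A t - uncovered_part A I)"
  unfolding uncovered_part_def multiply_covered_def by (auto; metis)

lemma exclusive_part_insert:
  "t \<notin> I \<Longrightarrow> exclusive_part A (insert t I) m =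
     (if m = t then A t \<inter> uncovered_part A I else exclusive_part A I m - A t)"
  unfolding exclusive_part_def uncovered_part_def by auto

definition charged_twice :: "('i \<Rightarrow> 'a set) \<Rightarrow> 'i set \<Rightarrow> 'a set \<Rightarrow> bool" where
  "charged_twice A I e \<longleftrightarrow>
     (\<exists>m\<in>I. \<exists>n\<in>I. m \<noteq> n \<and> e \<inter> exclusive_part A I m \<noteq> {} \<and> e \<inter> exclusive_part A I n \<noteq> {}) \<or>
     (e \<inter> uncovered_part A I \<noteq> {} \<and> e \<inter> multiply_covered A I \<noteq> {})"

definition potential :: "('i \<Rightarrow> 'a set) \<Rightarrow> 'i set \<Rightarrow> 'a set \<Rightarrow> nat" where
  "potential A I e =
     (if charged_twice A I e then 2 else of_bool (\<exists>m\<in>I. crosses (exclusive_part A I m) e))"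

lemma potential_le_2: "potential A I e \<le> 2"
  unfolding potential_def by simp

lemma potential_eq_2: "charged_twice A I e \<Longrightarrow> potential A I e = 2"
  unfolding potential_def by simp

lemma potential_le_1: "\<not> charged_twice A I e \<Longrightarrow> potential A I e \<le> 1"
  unfolding potential_def by simp

lemma potential_pos: "m \<in> I \<Longrightarrow> crosses (exclusive_part A I m) e \<Longrightarrow> 0 < potential A I e"
  unfolding potential_def by auto

lemma potential_pos_cases:
  assumes "0 < potential A I e"
  obtains "charged_twice A I e" | m where "m \<in> I" "crosses (exclusive_part A I m) e"
  using assms unfolding potential_def by (auto split: if_splits)

lemma potential_pair:
  assumes "i \<noteq> j"
  shows "potential A {i, j} e \<le> of_bool (crosses (A i) e) + of_bool (crosses (A j) e)"
proof -
  have regions: "exclusive_part A {i, j} i = A i - A j" "exclusive_part A {i, j} j = A j - A i"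
    "uncovered_part A {i, j} = - (A i \<union> A j)" "multiply_covered A {i, j} = A i \<inter> A j"
    using assms unfolding exclusive_part_def uncovered_part_def multiply_covered_def by auto
  show ?thesis
  proof (cases "charged_twice A {i, j} e")
    case True
    then have "crosses (A i) e \<and> crosses (A j) e"
      unfolding charged_twice_def crosses_def by (auto simp: regions)
    then show ?thesis using potential_eq_2[OF True] by simp
  next
    case False
    then show ?thesis
      unfolding potential_def crosses_def by (auto simp: regions)
  qed
qed

lemma potential_posI:
  assumes "y \<in> e" "y \<notin> uncovered_part A I \<union> multiply_covered A I"
    and "x \<in> e" "x \<in> uncovered_part A I \<union> multiply_covered A I"
  shows "0 < potential A I e"
proof -
  obtain m where m: "m \<in> I" "y \<in> exclusive_part A I m"
    using regions_cover[of y A I] assms(2) by blast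
  moreover have "x \<notin> exclusive_part A I m"
    using assms(4) exclusive_part_disjoint(1,2)[OF m(1), of A] by blast
  ultimately have "crosses (exclusive_part A I m) e"
    using assms(1,3) unfolding crosses_def by auto
  then show ?thesis by (rule potential_pos[OF m(1)])
qed

lemma potential_eq_0_imp_single_region:
  assumes "potential A I e = 0"
  shows "e \<subseteq> uncovered_part A I \<or> e \<subseteq> multiply_covered A I \<or> (\<exists>m\<in>I. e \<subseteq> exclusive_part A I m)"
proof -
  have not_charged: "\<not> charged_twice A I e"
    and no_crossing: "\<And>m. m \<in> I \<Longrightarrow> \<not> crosses (exclusive_part A I m) e"
    using assms unfolding potential_def by (auto split: if_splits)
  show ?thesis
  proof (cases "\<exists>m\<in>I. e \<inter> exclusive_part A I m \<noteq> {}")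
    case True
    then obtain m where "m \<in> I" "e \<inter> exclusive_part A I m \<noteq> {}" by blast
    then have "e \<subseteq> exclusive_part A I m"
      using no_crossing unfolding crosses_def by blast
    then show ?thesis using \<open>m \<in> I\<close> by auto
  next
    case False
    have "e \<subseteq> uncovered_part A I \<union> multiply_covered A I"
    proof
      fix x assume "x \<in> e"
      then show "x \<in> uncovered_part A I \<union> multiply_covered A I"
        using regions_cover[of x A I] False by blast
    qed
    moreover have "e \<inter> uncovered_part A I = {} \<or> e \<inter> multiply_covered A I = {}"
      using not_charged unfolding charged_twice_def by blast
    ultimately show ?thesis by auto
  qed
qed

lemma not_charged_twice_insert_if_uncovered:
  assumes t: "t \<notin> I" and e: "e \<subseteq> uncovered_part A I"
  shows "\<not> charged_twice A (insert t I) e"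
proof -
  have "e \<inter> exclusive_part A (insert t I) m = {}" if "m \<in> I" for m
    using e t that exclusive_part_disjoint(1)[OF that, of A] by (auto simp: exclusive_part_insert)
  moreover have "e \<inter> multiply_covered A (insert t I) = {}"
    using e t uncovered_part_Int_multiply_covered[of A I] by (auto simp: multiply_covered_insert)
  ultimately show ?thesis
    unfolding charged_twice_def by blast
qed

lemma not_charged_twice_insert_if_multiply_covered:
  assumes t: "t \<notin> I" and e: "e \<subseteq> multiply_covered A I"
  shows "\<not> charged_twice A (insert t I) e"
proof -
  have "e \<inter> exclusive_part A (insert t I) m = {}" if "m \<in> insert t I" for m
  proof (cases "m = t")
    case True
    then show ?thesis
      using e t uncovered_part_Int_multiply_covered[of A I] by (auto simp: exclusive_part_insert)
  next
    case False
    then show ?thesis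
      using e t that exclusive_part_disjoint(2)[of m I A] by (auto simp: exclusive_part_insert)
  qed
  moreover have "e \<inter> uncovered_part A (insert t I) = {}"
    using e uncovered_part_Int_multiply_covered[of A I] by (auto simp: uncovered_part_insert)
  ultimately show ?thesis
    unfolding charged_twice_def by blast
qed

lemma not_charged_twice_insert_if_exclusive:
  assumes t: "t \<notin> I" and m: "m \<in> I" and e: "e \<subseteq> exclusive_part A I m"
  shows "\<not> charged_twice A (insert t I) e"
proof -
  have "e \<inter> exclusive_part A (insert t I) n = {}" if "n \<in> insert t I" "n \<noteq> m" for n
  proof (cases "n = t")
    case True
    then show ?thesis
      using e t exclusive_part_disjoint(1)[OF m, of A] by (auto simp: exclusive_part_insert)
  next
    case False
    then show ?thesis
      using e t that exclusive_part_disjoint(3)[OF m, of n A] by (auto simp: exclusive_part_insert)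
  qed
  moreover have "e \<inter> uncovered_part A (insert t I) = {}"
    using e exclusive_part_disjoint(1)[OF m, of A] by (auto simp: uncovered_part_insert)
  ultimately show ?thesis
    unfolding charged_twice_def by blast
qed

lemma charged_twice_insert_imp_potential_pos:
  assumes "t \<notin> I" "charged_twice A (insert t I) e"
  shows "0 < potential A I e"
proof (rule ccontr)
  assume "\<not> 0 < potential A I e"
  then consider "e \<subseteq> uncovered_part A I" | "e \<subseteq> multiply_covered A I"
    | m where "m \<in> I" "e \<subseteq> exclusive_part A I m"
    using potential_eq_0_imp_single_region by blast
  then show False
  proof cases
    case 1
    show False using not_charged_twice_insert_if_uncovered[OF assms(1) 1] assms(2) by simp
  next
    case 2
    show False using not_charged_twice_insert_if_multiply_covered[OF assms(1) 2] assms(2) by simp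
  next
    case 3
    show False using not_charged_twice_insert_if_exclusive[OF assms(1) 3] assms(2) by simp
  qed
qed

lemma potential_insert_disjoint:
  assumes "t \<notin> I" "e \<inter> A t = {}"
  shows "potential A (insert t I) e = potential A I e"
proof -
  let ?J = "insert t I"
  have new: "e \<inter> exclusive_part A ?J t = {}"
    using assms by (auto simp: exclusive_part_insert)
  have old: "e \<inter> exclusive_part A ?J m = e \<inter> exclusive_part A I m" if "m \<in> I" for m
    using assms that by (auto simp: exclusive_part_insert)
  have uncovered: "e \<inter> uncovered_part A ?J = e \<inter> uncovered_part A I"
    and multiply: "e \<inter> multiply_covered A ?J = e \<inter> multiply_covered A I"
    using assms by (auto simp: uncovered_part_insert multiply_covered_insert)
  have "charged_twice A ?J e \<longleftrightarrow> charged_twice A I e"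
    unfolding charged_twice_def using new by (auto simp: old uncovered multiply)
  moreover have "(\<exists>m\<in>?J. crosses (exclusive_part A ?J m) e) \<longleftrightarrow>
      (\<exists>m\<in>I. crosses (exclusive_part A I m) e)"
    using new by (auto simp: crosses_iff_Int old)
  ultimately show ?thesis
    unfolding potential_def by simp
qed

lemma potential_insert_of_subset:
  assumes "t \<notin> I" "e \<subseteq> A t"
  shows "potential A (insert t I) e = of_bool (crosses (uncovered_part A I) e)"
proof -
  have "\<not> charged_twice A (insert t I) e"
    using assms unfolding charged_twice_def
    by (auto simp: exclusive_part_insert uncovered_part_insert)
  then show ?thesis
    using assms unfolding potential_def crosses_def by (auto simp: exclusive_part_insert)
qed

lemma potential_insert_inside:
  assumes "t \<notin> I" "e \<subseteq> A t"
  shows "potential A (insert t I) e + of_bool (crosses (A t \<inter> multiply_covered A I) e)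
    \<le> potential A I e"
proof -
  note pot_J = potential_insert_of_subset[where A = A, OF assms]
  consider "e \<inter> uncovered_part A I \<noteq> {}" "e \<inter> multiply_covered A I \<noteq> {}"
    | "e \<inter> multiply_covered A I = {}" | "e \<inter> uncovered_part A I = {}"
    by blast
  then show ?thesis
  proof cases
    case 1
    then have "potential A I e = 2"
      by (simp add: potential_eq_2 charged_twice_def)
    then show ?thesis by (simp add: pot_J)
  next
    case 2
    have "of_bool (crosses (uncovered_part A I) e) \<le> potential A I e"
    proof (cases "crosses (uncovered_part A I) e")
      case True
      then obtain x y where "x \<in> e" "x \<in> uncovered_part A I" "y \<in> e" "y \<notin> uncovered_part A I"
        unfolding crosses_def by blast
      then have "0 < potential A I e" using 2 potential_posI[of y e A I x] by blast
      then show ?thesis using True by simp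
    qed simp
    moreover have "\<not> crosses (A t \<inter> multiply_covered A I) e"
      using 2 unfolding crosses_def by blast
    ultimately show ?thesis by (simp add: pot_J)
  next
    case 3
    have "of_bool (crosses (A t \<inter> multiply_covered A I) e) \<le> potential A I e"
    proof (cases "crosses (A t \<inter> multiply_covered A I) e")
      case True
      then obtain x y where "x \<in> e" "x \<in> multiply_covered A I" "y \<in> e" "y \<notin> multiply_covered A I"
        using assms(2) unfolding crosses_def by blast
      then have "0 < potential A I e" using 3 potential_posI[of y e A I x] by blast
      then show ?thesis using True by simp
    qed simp
    moreover have "\<not> crosses (uncovered_part A I) e"
      using 3 unfolding crosses_def by blast
    ultimately show ?thesis by (simp add: pot_J)
  qed
qed

lemma potential_insert_le_if_meets_multiply_covered:
  assumes t: "t \<notin> I" and not_charged: "\<not> charged_twice A I e"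
    and z: "z \<in> e" "z \<in> multiply_covered A I"
  shows "potential A (insert t I) e \<le> potential A I e"
proof (cases "potential A (insert t I) e = 0")
  case False
  have no_uncovered: "e \<inter> uncovered_part A I = {}"
    using not_charged z unfolding charged_twice_def by blast
  then have not_charged_J: "\<not> charged_twice A (insert t I) e"
    using not_charged t unfolding charged_twice_def
    by (auto simp: exclusive_part_insert uncovered_part_insert)
  then obtain m where m: "m \<in> insert t I" "crosses (exclusive_part A (insert t I) m) e"
    using False by (auto elim: potential_pos_cases)
  then have "m \<noteq> t"
    using no_uncovered t by (auto simp: exclusive_part_insert crosses_def)
  with m t obtain y where y: "y \<in> e" "y \<in> exclusive_part A I m" "m \<in> I"
    by (auto simp: exclusive_part_insert crosses_def)
  then have "y \<notin> uncovered_part A I \<union> multiply_covered A I"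
    using exclusive_part_disjoint(1,2)[OF y(3), of A] by blast
  then have "0 < potential A I e"
    using potential_posI[of y e A I z] y z by blast
  then show ?thesis using potential_le_1[OF not_charged_J] by simp
qed simp

lemma potential_insert_crossing:
  assumes t: "t \<notin> I" and "crosses (A t) e"
  shows "potential A (insert t I) e + of_bool (crosses (A t \<inter> multiply_covered A I) e)
    \<le> potential A I e + 1"
proof (cases "crosses (A t \<inter> multiply_covered A I) e")
  case no_crossing: False
  show ?thesis
  proof (cases "potential A I e = 0")
    case True
    then have "\<not> charged_twice A (insert t I) e"
      using charged_twice_insert_imp_potential_pos[OF t, of A e] by auto
    then show ?thesis using no_crossing potential_le_1 by fastforce
  next
    case False
    then show ?thesis using no_crossing potential_le_2[of A "insert t I" e] by simp
  qed
next
  case crossing: True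
  then obtain z where z: "z \<in> e" "z \<in> multiply_covered A I"
    unfolding crosses_def by blast
  show ?thesis
  proof (cases "charged_twice A I e")
    case True
    then show ?thesis using potential_eq_2[OF True] potential_le_2[of A "insert t I" e] by simp
  next
    case False
    then show ?thesis
      using potential_insert_le_if_meets_multiply_covered[OF t False z] crossing by simp
  qed
qed

lemma potential_insert:
  assumes "t \<notin> I"
  shows "potential A (insert t I) e + of_bool (crosses (A t \<inter> multiply_covered A I) e)
    \<le> potential A I e + of_bool (crosses (A t) e)"
proof -
  consider "e \<inter> A t = {}" | "e \<subseteq> A t" | "crosses (A t) e"
    unfolding crosses_def by blast
  then show ?thesis
  proof cases
    case 1
    then have "\<not> crosses (A t \<inter> multiply_covered A I) e"
      unfolding crosses_def by blast
    then show ?thesis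
      using potential_insert_disjoint[OF assms, where A = A and e = e] 1 by simp
  next
    case 2
    then show ?thesis
      using potential_insert_inside[OF assms, where A = A and e = e] by (simp add: crosses_def)
  next
    case 3
    then show ?thesis
      using potential_insert_crossing[OF assms, where A = A and e = e] by simp
  qed
qed

lemma sum_potential_le_pair:
  assumes E: "\<forall>e\<in>#E. e \<subseteq> V" and I: "finite I" "i \<in> I" "j \<in> I" "i \<noteq> j"
    and min_cut: "\<And>t D. t \<in> I - {i, j} \<Longrightarrow> A i \<inter> A j \<subseteq> D \<Longrightarrow> dcut V E (A t) \<le> dcut V E (A t \<inter> D)"
  shows "(\<Sum>e\<in>#E. potential A I e) \<le> dcut V E (A i) + dcut V E (A j)"
proof -
  have "(\<Sum>e\<in>#E. potential A (K \<union> {i, j}) e) \<le> dcut V E (A i) + dcut V E (A j)"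
    if "finite K" "K \<subseteq> I - {i, j}" for K
    using that
  proof (induction K rule: finite_induct)
    case empty
    have "(\<Sum>e\<in>#E. potential A {i, j} e)
        \<le> (\<Sum>e\<in>#E. of_bool (crosses (A i) e) + of_bool (crosses (A j) e))"
      by (rule sum_mset_mono) (rule potential_pair[OF \<open>i \<noteq> j\<close>])
    then show ?case by (simp add: dcut_eq_sum_crosses[OF E] sum_mset.distrib)
  next
    case (insert t K)
    let ?I = "K \<union> {i, j}"
    have t: "t \<notin> ?I" "t \<in> I - {i, j}" using insert by auto
    have "A i \<inter> A j \<subseteq> multiply_covered A ?I"
      using \<open>i \<noteq> j\<close> by (simp add: Int_subset_multiply_covered)
    then have "dcut V E (A t) \<le> dcut V E (A t \<inter> multiply_covered A ?I)"
      using min_cut t(2) by blast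
    moreover have "(\<Sum>e\<in>#E. potential A (insert t ?I) e) + dcut V E (A t \<inter> multiply_covered A ?I)
        \<le> (\<Sum>e\<in>#E. potential A ?I e) + dcut V E (A t)"
    proof -
      have "(\<Sum>e\<in>#E. potential A (insert t ?I) e + of_bool (crosses (A t \<inter> multiply_covered A ?I) e))
          \<le> (\<Sum>e\<in>#E. potential A ?I e + of_bool (crosses (A t) e))"
        by (rule sum_mset_mono) (rule potential_insert[OF t(1)])
      then show ?thesis by (simp add: dcut_eq_sum_crosses[OF E] sum_mset.distrib)
    qed
    moreover have "insert t K \<union> {i, j} = insert t ?I" by auto
    ultimately show ?case using insert.IH insert.prems by auto
  qed
  moreover have "(I - {i, j}) \<union> {i, j} = I" using I by auto
  ultimately show ?thesis using I(1) by (metis finite_Diff order_refl)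
qed

lemma sum_potential_le_Min_pairs:
  assumes E: "\<forall>e\<in>#E. e \<subseteq> V" and I: "finite I" "\<exists>i\<in>I. \<exists>j\<in>I. i \<noteq> j"
    and min_cut: "\<And>i j t D. i \<in> I \<Longrightarrow> j \<in> I \<Longrightarrow> t \<in> I \<Longrightarrow> A i \<inter> A j \<subseteq> D \<Longrightarrow>
      dcut V E (A t) \<le> dcut V E (A t \<inter> D)"
  shows "(\<Sum>e\<in>#E. potential A I e)
    \<le> Min {dcut V E (A i) + dcut V E (A j) | i j. i \<in> I \<and> j \<in> I \<and> i \<noteq> j}"
    (is "_ \<le> Min ?M")
proof (rule Min.boundedI)
  have "?M \<subseteq> (\<lambda>(i, j). dcut V E (A i) + dcut V E (A j)) ` (I \<times> I)" by auto
  then show "finite ?M" by (rule finite_subset) (simp add: I(1))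
  show "?M \<noteq> {}" using I(2) by blast
  fix d assume "d \<in> ?M"
  then obtain i j where ij: "i \<in> I" "j \<in> I" "i \<noteq> j" "d = dcut V E (A i) + dcut V E (A j)"
    by blast
  then show "(\<Sum>e\<in>#E. potential A I e) \<le> d"
    using sum_potential_le_pair[OF E I(1) ij(1-3)] min_cut by blast
qed

lemma crossing_two_blocks_le_potential:
  assumes "C1 \<subseteq> I" "C2 \<subseteq> I" "C1 \<inter> C2 = {}"
  shows "of_bool (\<exists>m\<in>C1. crosses (exclusive_part A I m) e)
    + of_bool (\<exists>m\<in>C2. crosses (exclusive_part A I m) e) \<le> potential A I e"
proof (cases "(\<exists>m\<in>C1. crosses (exclusive_part A I m) e) \<and> (\<exists>m\<in>C2. crosses (exclusive_part A I m) e)")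
  case True
  then obtain m n where mn: "m \<in> C1" "n \<in> C2"
    and "crosses (exclusive_part A I m) e" "crosses (exclusive_part A I n) e"
    by blast
  then have "e \<inter> exclusive_part A I m \<noteq> {}" "e \<inter> exclusive_part A I n \<noteq> {}"
    unfolding crosses_def by blast+
  moreover have "m \<in> I" "n \<in> I" "m \<noteq> n"
    using mn assms by blast+
  ultimately have "charged_twice A I e"
    unfolding charged_twice_def by blast
  then have "potential A I e = 2" by (rule potential_eq_2)
  then show ?thesis using True by simp
next
  case False
  then have "of_bool (\<exists>m\<in>C1. crosses (exclusive_part A I m) e)
      + of_bool (\<exists>m\<in>C2. crosses (exclusive_part A I m) e)
      = (of_bool (\<exists>m\<in>C1 \<union> C2. crosses (exclusive_part A I m) e) :: nat)"
    by auto
  also have "\<dots> \<le> potential A I e"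
    using assms(1,2) potential_pos[of _ I A e] by (auto simp: Suc_le_eq)
  finally show ?thesis .
qed

definition with_remainder :: "'a set \<Rightarrow> nat \<Rightarrow> (nat \<Rightarrow> 'a set) \<Rightarrow> nat \<Rightarrow> 'a set" where
  "with_remainder V k Z l = (if l < k then Z l else V - (\<Union>j\<in>{1..<k}. Z j))"

lemma is_k_partition_with_remainder:
  assumes "1 \<le> k" and Z: "\<And>l. l \<in> {1..<k} \<Longrightarrow> Z l \<noteq> {} \<and> Z l \<subseteq> V"
    and disj: "disjoint_family_on Z {1..<k}" and rest: "\<not> V \<subseteq> (\<Union>l\<in>{1..<k}. Z l)"
  shows "is_k_partition V k (with_remainder V k Z)"
proof -
  let ?P = "with_remainder V k Z"
  have first: "?P l = Z l" if "l < k" for l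
    using that by (simp add: with_remainder_def)
  have last: "?P k = V - (\<Union>l\<in>{1..<k}. Z l)"
    by (simp add: with_remainder_def)
  have index_cases: "l \<in> {1..<k} \<or> l = k" if "l \<in> {1..k}" for l
    using that by auto
  have "?P l \<noteq> {}" if "l \<in> {1..k}" for l
    using index_cases[OF that] Z first last rest by auto
  moreover have "?P a \<inter> ?P b = {}" if ab: "a \<in> {1..k}" "b \<in> {1..k}" "a \<noteq> b" for a b
  proof -
    consider "a \<in> {1..<k}" "b \<in> {1..<k}" | "a = k" "b \<in> {1..<k}" | "a \<in> {1..<k}" "b = k"
      using index_cases[OF ab(1)] index_cases[OF ab(2)] ab(3) by blast
    then show ?thesis
    proof cases
      case 1
      then show ?thesis using disjoint_family_onD[OF disj 1 ab(3)] first by simp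
    qed (use first last in auto)
  qed
  moreover have "(\<Union>l\<in>{1..k}. ?P l) = V"
  proof -
    have "{1..k} = insert k {1..<k}"
      using \<open>1 \<le> k\<close> by auto
    then have "(\<Union>l\<in>{1..k}. ?P l) = ?P k \<union> (\<Union>l\<in>{1..<k}. Z l)"
      using first by auto
    also have "\<dots> = V"
    proof -
      have "(\<Union>l\<in>{1..<k}. Z l) \<subseteq> V"
        using Z by (meson UN_least)
      then show ?thesis using last by auto
    qed
    finally show ?thesis .
  qed
  ultimately show ?thesis
    unfolding is_k_partition_def by blast
qed

lemma cost_le_sum_crossing_parts:
  assumes "\<And>a b. a \<in> {1..k} \<Longrightarrow> b \<in> {1..k} \<Longrightarrow> a \<noteq> b \<Longrightarrow> P a \<inter> P b = {}"
  shows "cost E k P \<le> (\<Sum>e\<in>#E. of_bool (\<exists>l\<in>{1..<k}. crosses (P l) e))"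
proof -
  have "filter_mset (\<lambda>e. \<exists>a\<in>{1..k}. \<exists>b\<in>{1..k}. a \<noteq> b \<and> e \<inter> P a \<noteq> {} \<and> e \<inter> P b \<noteq> {}) E
      \<subseteq># filter_mset (\<lambda>e. \<exists>l\<in>{1..<k}. crosses (P l) e) E"
  proof (rule filter_mset_mono_strong[OF subset_mset.order_refl])
    fix e assume "\<exists>a\<in>{1..k}. \<exists>b\<in>{1..k}. a \<noteq> b \<and> e \<inter> P a \<noteq> {} \<and> e \<inter> P b \<noteq> {}"
    then obtain a b where ab: "a \<in> {1..k}" "b \<in> {1..k}" "a \<noteq> b" "a < k" "e \<inter> P a \<noteq> {}" "e \<inter> P b \<noteq> {}"
      by (metis atLeastAtMost_iff order_le_less)
    then have "crosses (P a) e"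
      using assms[OF ab(1-3)] unfolding crosses_def by blast
    then show "\<exists>l\<in>{1..<k}. crosses (P l) e" using ab by auto
  qed
  then show ?thesis
    unfolding cost_def size_filter_mset_eq_sum_of_bool[symmetric] by (rule size_mset_mono)
qed

lemma exclusive_parts_k_partition:
  fixes A :: "'i \<Rightarrow> 'a set" and c :: "nat \<Rightarrow> 'i"
  assumes k: "1 \<le> k" and c: "c ` {1..<k} \<subseteq> I" "inj_on c {1..<k}"
    and nonempty: "\<And>m. m \<in> I \<Longrightarrow> exclusive_part A I m \<noteq> {}"
    and sub: "\<And>m. m \<in> I \<Longrightarrow> A m \<subseteq> V"
    and R: "R \<subseteq> V" "R \<noteq> {}" "R \<subseteq> uncovered_part A I"
    and T: "T \<subseteq> V" "T \<subseteq> multiply_covered A I"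
  defines "P \<equiv> with_remainder V k (exclusive_part A I \<circ> c)"
  shows "is_k_partition V k P" and "T \<subset> P k"
    and "cost E k P \<le> (\<Sum>e\<in>#E. of_bool (\<exists>m\<in>c ` {1..<k}. crosses (exclusive_part A I m) e))"
proof -
  let ?Z = "exclusive_part A I \<circ> c"
  have c_I: "c l \<in> I" if "l \<in> {1..<k}" for l
    using c(1) that by blast
  have rest: "X \<subseteq> P k" if "X \<subseteq> V" "\<And>m. m \<in> I \<Longrightarrow> X \<inter> exclusive_part A I m = {}" for X
    using that c_I unfolding P_def with_remainder_def by fastforce
  have R_T_rest: "R \<union> T \<subseteq> P k"
  proof (rule rest)
    fix m assume "m \<in> I"
    then show "(R \<union> T) \<inter> exclusive_part A I m = {}"
      using R(3) T(2) exclusive_part_disjoint(1,2)[of m I A] by blast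
  qed (use R(1) T(1) in blast)
  have Z: "?Z l \<noteq> {} \<and> ?Z l \<subseteq> V" if "l \<in> {1..<k}" for l
    using nonempty[OF c_I[OF that]] sub[OF c_I[OF that]] unfolding exclusive_part_def by auto
  have disj: "disjoint_family_on ?Z {1..<k}"
    unfolding disjoint_family_on_def
  proof (intro ballI impI)
    fix a b assume ab: "a \<in> {1..<k}" "b \<in> {1..<k}" "a \<noteq> b"
    then have "c a \<noteq> c b" using c(2) by (auto dest: inj_onD)
    then show "?Z a \<inter> ?Z b = {}"
      using exclusive_part_disjoint(3)[OF c_I[OF ab(2)] c_I[OF ab(1)]] by simp
  qed
  have not_covered: "\<not> V \<subseteq> (\<Union>l\<in>{1..<k}. ?Z l)"
    using R_T_rest R(1,2) unfolding P_def with_remainder_def by auto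
  show partition: "is_k_partition V k P"
    unfolding P_def using k Z disj not_covered by (rule is_k_partition_with_remainder)
  have "R \<inter> T = {}"
    using R(3) T(2) uncovered_part_Int_multiply_covered[of A I] by blast
  then show "T \<subset> P k"
    using R_T_rest R(2) by blast
  have "cost E k P \<le> (\<Sum>e\<in>#E. of_bool (\<exists>l\<in>{1..<k}. crosses (P l) e))"
    by (rule cost_le_sum_crossing_parts) (use partition in \<open>simp add: is_k_partition_def\<close>)
  also have "\<dots> = (\<Sum>e\<in>#E. of_bool (\<exists>m\<in>c ` {1..<k}. crosses (exclusive_part A I m) e))"
    unfolding P_def with_remainder_def by simp
  finally show "cost E k P \<le> (\<Sum>e\<in>#E. of_bool (\<exists>m\<in>c ` {1..<k}. crosses (exclusive_part A I m) e))" .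
qed

lemma cheap_k_partition:
  fixes A :: "nat \<Rightarrow> 'a set"
  assumes k: "2 \<le> k" "2 * k - 2 \<le> p"
    and nonempty: "\<And>m. m \<in> {1..p} \<Longrightarrow> exclusive_part A {1..p} m \<noteq> {}"
    and sub: "\<And>m. m \<in> {1..p} \<Longrightarrow> A m \<subseteq> V"
    and R: "R \<subseteq> V" "R \<noteq> {}" "R \<subseteq> uncovered_part A {1..p}"
    and T: "T \<subseteq> V" "T \<subseteq> multiply_covered A {1..p}"
  shows "\<exists>P. is_k_partition V k P \<and> T \<subset> P k \<and> 2 * cost E k P \<le> (\<Sum>e\<in>#E. potential A {1..p} e)"
proof -
  let ?shift = "\<lambda>l. l + (k - 1)"
  let ?crossing = "\<lambda>C e. of_bool (\<exists>m\<in>C. crosses (exclusive_part A {1..p} m) e) :: nat"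
  have "1 \<le> k" using k by simp
  have c1: "id ` {1..<k} \<subseteq> {1..p}" "inj_on id {1..<k}"
    using k by auto
  have c2: "?shift ` {1..<k} \<subseteq> {1..p}" "inj_on ?shift {1..<k}"
    using k by (auto simp: inj_on_def)
  note P = exclusive_parts_k_partition[OF \<open>1 \<le> k\<close> c1 nonempty sub R T]
  note Q = exclusive_parts_k_partition[OF \<open>1 \<le> k\<close> c2 nonempty sub R T]
  let ?P = "with_remainder V k (exclusive_part A {1..p} \<circ> id)"
  let ?Q = "with_remainder V k (exclusive_part A {1..p} \<circ> ?shift)"
  have "cost E k ?P + cost E k ?Q
      \<le> (\<Sum>e\<in>#E. ?crossing (id ` {1..<k}) e + ?crossing (?shift ` {1..<k}) e)"
    using P(3)[of E] Q(3)[of E] by (simp add: sum_mset.distrib)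
  also have "\<dots> \<le> (\<Sum>e\<in>#E. potential A {1..p} e)"
    by (rule sum_mset_mono, rule crossing_two_blocks_le_potential) (use c1 c2 in auto)
  finally have total: "cost E k ?P + cost E k ?Q \<le> (\<Sum>e\<in>#E. potential A {1..p} e)" .
  show ?thesis
  proof (cases "cost E k ?P \<le> cost E k ?Q")
    case True
    then show ?thesis using P(1,2) total by (intro exI[of _ ?P]) simp
  next
    case False
    then show ?thesis using Q(1,2) total by (intro exI[of _ ?Q]) simp
  qed
qed

theorem theorem3p1:
  fixes V :: "'a set" and E :: "'a set multiset" and k p :: nat
    and R U :: "'a set" and u :: "nat \<Rightarrow> 'a" and A :: "nat \<Rightarrow> 'a set"
  assumes hg: "hypergraph V E"
    and k: "k \<ge> 2"
    and R: "R \<noteq> {}" "R \<subset> U" "U \<subset> V"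
    and u: "inj_on u {1..p}" "u ` {1..p} \<subseteq> U - R"
    and p: "p \<ge> 2 * k - 2"
    and cuts: "\<And>i. i \<in> {1..p} \<Longrightarrow>
       min_terminal_cut V E ((u ` {1..p} \<union> R) - {u i}) (V - U) (V - A i) \<and> A i \<subseteq> V"
    and isol: "\<And>i. i \<in> {1..p} \<Longrightarrow> u i \<in> A i - (\<Union>j\<in>{1..p} - {i}. A j)"
  shows "\<exists>P. is_k_partition V k P \<and> V - U \<subset> P k \<and>
    real (cost E k P) \<le>
      real (Min {dcut V E (A i) + dcut V E (A j) | i j. i \<in> {1..p} \<and> j \<in> {1..p} \<and> i \<noteq> j}) / 2"
proof -
  let ?I = "{1..p}"
  have "2 \<le> p" using k p by linarith
  have "R \<subseteq> V" using R by blast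
  have A_V: "A i \<subseteq> V" if "i \<in> ?I" for i
    using cuts[OF that] by blast
  have sides: "V - U \<subseteq> A i" "R \<inter> A i = {}" if "i \<in> ?I" for i
  proof -
    have "u i \<notin> R" using u(2) that by blast
    then show "V - U \<subseteq> A i" "R \<inter> A i = {}"
      using cuts[OF that] unfolding min_terminal_cut_def terminal_cut_def by blast+
  qed
  have R_uncovered: "R \<subseteq> uncovered_part A ?I"
    using sides(2) unfolding uncovered_part_def by blast
  have T_covered: "V - U \<subseteq> multiply_covered A ?I"
    using sides(1)[of 1] sides(1)[of 2] Int_subset_multiply_covered[of 1 ?I 2 A] \<open>2 \<le> p\<close> by auto
  have nonempty: "exclusive_part A ?I i \<noteq> {}" if "i \<in> ?I" for i
    using isol[OF that] unfolding exclusive_part_def by blast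
  obtain P where P: "is_k_partition V k P" "V - U \<subset> P k"
    and cost: "2 * cost E k P \<le> (\<Sum>e\<in>#E. potential A ?I e)"
    using cheap_k_partition[where A = A and E = E,
        OF k p nonempty A_V \<open>R \<subseteq> V\<close> R(1) R_uncovered Diff_subset T_covered]
    by blast
  have min_cut: "dcut V E (A t) \<le> dcut V E (A t \<inter> D)"
    if "i \<in> ?I" "j \<in> ?I" "t \<in> ?I" "A i \<inter> A j \<subseteq> D" for i j t D
  proof (rule min_terminal_cut_le_inter)
    show "min_terminal_cut V E ((u ` ?I \<union> R) - {u t}) (V - U) (V - A t)" "A t \<subseteq> V"
      using cuts[OF that(3)] by blast+
    show "V - U \<subseteq> D" using sides(1)[OF that(1)] sides(1)[OF that(2)] that(4) by blast
  qed
  have "(\<Sum>e\<in>#E. potential A ?I e)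
      \<le> Min {dcut V E (A i) + dcut V E (A j) | i j. i \<in> ?I \<and> j \<in> ?I \<and> i \<noteq> j}"
  proof (rule sum_potential_le_Min_pairs)
    show "\<forall>e\<in>#E. e \<subseteq> V" using hg by (simp add: hypergraph_def)
    show "\<exists>i\<in>?I. \<exists>j\<in>?I. i \<noteq> j"
      using \<open>2 \<le> p\<close> by (intro bexI[of _ 1] bexI[of _ 2]) auto
  qed (simp_all add: min_cut)
  then show ?thesis
    using P cost by (intro exI[of _ P]) linarith
qed

end
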